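(* Let $\mathcal F=(X,F)$, $\mathcal G=(Y,G)$, $\mathcal H=(Z,H)$ be Bishop spaces. For $\lambda\in\mathrm{Mor}(\mathcal G,\mathcal H)$ let $\lambda^+:\mathrm{Mor}(\mathcal H,\mathcal F)\to\mathrm{Mor}(\mathcal G,\mathcal F)$, $\lambda^+(\phi):=\phi\circ\lambda$, and for $\mu\in\mathrm{Mor}(\mathcal H,\mathcal G)$ let $\mu^-:\mathrm{Mor}(\mathcal F,\mathcal H)\to\mathrm{Mor}(\mathcal F,\mathcal G)$, $\mu^-(\theta):=\mu\circ\theta$. Let ${}^+:\mathrm{Mor}(\mathcal G,\mathcal H)\to\mathrm{Mor}(\mathcal H\to\mathcal F,\mathcal G\to\mathcal F)$ be $\lambda\mapsto\lambda^+$ and ${}^-:\mathrm{Mor}(\mathcal H,\mathcal G)\to\mathrm{Mor}(\mathcal F\to\mathcal H,\mathcal F\to\mathcal G)$ be $\mu\mapsto\mu^-$. Then ${}^+\in\mathrm{Mor}(\mathcal G\to\mathcal H,(\mathcal H\to\mathcal F)\to(\mathcal G\to\mathcal F))$ and ${}^-\in\mathrm{Mor}(\mathcal H\to\mathcal G,(\mathcal F\to\mathcal H)\to(\mathcal F\to\mathcal G))$.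
   Context: Work in Bishop-style constructive mathematics. A Bishop topology on a set $X$ is a set $F$ of functions $X\to\mathbb R$ containing the constant functions, closed under addition, under composition with functions $\mathbb R\to\mathbb R$ uniformly continuous on every $[-n,n]$, and under uniform limits; $(X,F)$ is a Bishop space. For a set $F_0$ of functions $X\to\mathbb R$, $\bigvee F_0$ is the least Bishop topology containing $F_0$. A Bishop morphism $(X,F)\to(Y,G)$ is a function $h:X\to Y$ with $g\circ h\in F$ for all $g\in G$; $\mathrm{Mor}(\mathcal F,\mathcal G)$ is their set (equality pointwise). The (pointwise) exponential Bishop space is $\mathcal F\to\mathcal G=(\mathrm{Mor}(\mathcal F,\mathcal G),F\to G)$ where $F\to G=\bigvee\{\phi_{x,g}:x\in X,g\in G\}$ and $\phi_{x,g}(h)=g(h(x))$. *)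

theory Defs
  imports Complex_Main "HOL-Library.FuncSet"
begin

text \<open>Functions on a carrier X are represented extensionally: outside X they are
  undefined (FuncSet's restrict / extensional), so equality is pointwise on X.\<close>

definition Bu :: "(real \<Rightarrow> real) set" where
  "Bu = {\<phi>. \<forall>n::nat. uniformly_continuous_on {- real n .. real n} \<phi>}"

definition bishop_topology :: "'a set \<Rightarrow> ('a \<Rightarrow> real) set \<Rightarrow> bool" where
  "bishop_topology X F \<longleftrightarrow>
     F \<subseteq> extensional X \<and>
     (\<forall>c::real. restrict (\<lambda>x. c) X \<in> F) \<and>
     (\<forall>f\<in>F. \<forall>g\<in>F. restrict (\<lambda>x. f x + g x) X \<in> F) \<and>
     (\<forall>f\<in>F. \<forall>\<phi>\<in>Bu. restrict (\<lambda>x. \<phi> (f x)) X \<in> F) \<and>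
     (\<forall>f\<in>extensional X.
        (\<forall>e>0. \<exists>g\<in>F. \<forall>x\<in>X. \<bar>f x - g x\<bar> \<le> e) \<longrightarrow> f \<in> F)"

definition bishop_gen :: "'a set \<Rightarrow> ('a \<Rightarrow> real) set \<Rightarrow> ('a \<Rightarrow> real) set" where
  "bishop_gen X F0 = \<Inter> {F. bishop_topology X F \<and> F0 \<subseteq> F}"

definition Mor :: "'a set \<Rightarrow> ('a \<Rightarrow> real) set \<Rightarrow> 'b set \<Rightarrow> ('b \<Rightarrow> real) set \<Rightarrow> ('a \<Rightarrow> 'b) set" where
  "Mor X F Y G = {h \<in> X \<rightarrow>\<^sub>E Y. \<forall>g\<in>G. restrict (\<lambda>x. g (h x)) X \<in> F}"

definition exp_top :: "'a set \<Rightarrow> ('a \<Rightarrow> real) set \<Rightarrow> 'b set \<Rightarrow> ('b \<Rightarrow> real) set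
    \<Rightarrow> (('a \<Rightarrow> 'b) \<Rightarrow> real) set" where
  "exp_top X F Y G = bishop_gen (Mor X F Y G)
     {restrict (\<lambda>h. g (h x)) (Mor X F Y G) | x g. x \<in> X \<and> g \<in> G}"

end

theory Submission
  imports Defs
begin

(*
  A map h into a space whose topology is generated by G0 is a morphism as soon as g \<circ> h lies
  in the topology of the domain for every generator g, because the functions g with that property
  form a Bishop topology.  The exponential topology is generated by the evaluations
  \<phi> \<mapsto> g (\<phi> x), and precomposing or postcomposing with a morphism turns an evaluation into an
  evaluation: g ((\<phi> \<circ> \<lambda>) y) = g (\<phi> (\<lambda> y)) and g ((\<mu> \<circ> \<theta>) x) = (g \<circ> \<mu>) (\<theta> x).  For the operators ^+ and ^- themselves it suffices, by the same criterion, that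
  each of their sections is a morphism; the section of ^+ at \<phi> is \<phi>^-, that of ^- at \<theta> is \<theta>^+.
*)

lemma bishop_topology_extensional: "bishop_topology X (extensional X)"
  unfolding bishop_topology_def by auto

lemma bishop_topology_Inter:
  assumes "\<T> \<noteq> {}" and "\<And>F. F \<in> \<T> \<Longrightarrow> bishop_topology X F"
  shows "bishop_topology X (\<Inter> \<T>)"
proof -
  have closed_under_limits: "f \<in> \<Inter> \<T>"
    if "f \<in> extensional X" and approx: "\<forall>e>0. \<exists>g\<in>\<Inter> \<T>. \<forall>x\<in>X. \<bar>f x - g x\<bar> \<le> e" for f
  proof
    fix F assume "F \<in> \<T>"
    with approx have "\<forall>e>0. \<exists>g\<in>F. \<forall>x\<in>X. \<bar>f x - g x\<bar> \<le> e" by blast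
    with \<open>F \<in> \<T>\<close> \<open>f \<in> extensional X\<close> assms(2) show "f \<in> F"
      unfolding bishop_topology_def by blast
  qed
  from assms have "\<Inter> \<T> \<subseteq> extensional X"
    unfolding bishop_topology_def by blast
  with assms(2) show ?thesis
    unfolding bishop_topology_def[of X "\<Inter> \<T>"] using closed_under_limits
    by (auto simp: bishop_topology_def)
qed

lemma
  shows bishop_topology_bishop_gen: "F0 \<subseteq> extensional X \<Longrightarrow> bishop_topology X (bishop_gen X F0)"
    and bishop_gen_superset: "F0 \<subseteq> bishop_gen X F0"
    and bishop_gen_least: "bishop_topology X F \<Longrightarrow> F0 \<subseteq> F \<Longrightarrow> bishop_gen X F0 \<subseteq> F"
  unfolding bishop_gen_def
  by (auto intro!: bishop_topology_Inter bishop_topology_extensional)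

lemma bishop_topology_add:
  assumes "bishop_topology X F" "restrict f X \<in> F" "restrict g X \<in> F"
  shows "restrict (\<lambda>x. f x + g x) X \<in> F"
proof -
  have "restrict (\<lambda>x. restrict f X x + restrict g X x) X \<in> F"
    using assms unfolding bishop_topology_def by blast
  then show ?thesis by (simp cong: restrict_cong)
qed

lemma bishop_topology_compose:
  assumes "bishop_topology X F" "restrict f X \<in> F" "\<phi> \<in> Bu"
  shows "restrict (\<lambda>x. \<phi> (f x)) X \<in> F"
proof -
  have "restrict (\<lambda>x. \<phi> (restrict f X x)) X \<in> F"
    using assms unfolding bishop_topology_def by blast
  then show ?thesis by (simp cong: restrict_cong)
qed

lemma bishop_topology_pullback:
  assumes FA: "bishop_topology A FA" and h: "h \<in> A \<rightarrow> B"
  shows "bishop_topology B {g \<in> extensional B. restrict (\<lambda>a. g (h a)) A \<in> FA}"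
    (is "bishop_topology B ?P")
proof -
  have pull_restrict: "restrict (\<lambda>a. restrict k B (h a)) A = restrict (\<lambda>a. k (h a)) A"
    for k :: "_ \<Rightarrow> real"
    using h by (intro restrict_ext) auto
  have "f \<in> ?P"
    if "f \<in> extensional B" and approx: "\<forall>e>0. \<exists>g\<in>?P. \<forall>y\<in>B. \<bar>f y - g y\<bar> \<le> e" for f
  proof -
    have "\<exists>g'\<in>FA. \<forall>a\<in>A. \<bar>restrict (\<lambda>a. f (h a)) A a - g' a\<bar> \<le> e" if "e > 0" for e
    proof -
      from approx \<open>e > 0\<close> obtain g where "g \<in> ?P" "\<forall>y\<in>B. \<bar>f y - g y\<bar> \<le> e" by blast
      with h show ?thesis by (intro bexI[of _ "restrict (\<lambda>a. g (h a)) A"]) auto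
    qed
    with FA \<open>f \<in> extensional B\<close> show ?thesis unfolding bishop_topology_def by auto
  qed
  with FA show ?thesis
    unfolding bishop_topology_def[of B] mem_Collect_eq pull_restrict
    by (auto simp: bishop_topology_def intro: bishop_topology_add bishop_topology_compose)
qed

lemma Mor_mapsto: "h \<in> Mor A FA B FB \<Longrightarrow> a \<in> A \<Longrightarrow> h a \<in> B"
  unfolding Mor_def by auto

lemma Mor_pullback: "h \<in> Mor A FA B FB \<Longrightarrow> g \<in> FB \<Longrightarrow> restrict (\<lambda>a. g (h a)) A \<in> FA"
  unfolding Mor_def by auto

lemma Mor_bishop_genI:
  assumes "bishop_topology A FA" and "h \<in> A \<rightarrow>\<^sub>E B" and "G0 \<subseteq> extensional B"
    and "\<And>g. g \<in> G0 \<Longrightarrow> restrict (\<lambda>a. g (h a)) A \<in> FA"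
  shows "h \<in> Mor A FA B (bishop_gen B G0)"
proof -
  have "bishop_gen B G0 \<subseteq> {g \<in> extensional B. restrict (\<lambda>a. g (h a)) A \<in> FA}"
    using assms by (intro bishop_gen_least bishop_topology_pullback) auto
  with assms(2) show ?thesis unfolding Mor_def by auto
qed

lemma exp_top_generators_extensional:
  "{restrict (\<lambda>h. g (h x)) (Mor X F Y G) | x g. x \<in> X \<and> g \<in> G} \<subseteq> extensional (Mor X F Y G)"
  by auto

lemma bishop_topology_exp_top: "bishop_topology (Mor X F Y G) (exp_top X F Y G)"
  unfolding exp_top_def by (rule bishop_topology_bishop_gen[OF exp_top_generators_extensional])

lemma evaluation_in_exp_top:
  assumes "x \<in> X" and "g \<in> G"
  shows "restrict (\<lambda>h. g (h x)) (Mor X F Y G) \<in> exp_top X F Y G"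
  unfolding exp_top_def using assms by (intro subsetD[OF bishop_gen_superset]) blast

lemma Mor_into_exp_topI:
  assumes "bishop_topology A FA" and "T \<in> A \<rightarrow>\<^sub>E Mor B FB C FC"
    and "\<And>b g. b \<in> B \<Longrightarrow> g \<in> FC \<Longrightarrow> restrict (\<lambda>a. g (T a b)) A \<in> FA"
  shows "T \<in> Mor A FA (Mor B FB C FC) (exp_top B FB C FC)"
  unfolding exp_top_def
proof (rule Mor_bishop_genI[OF assms(1,2) exp_top_generators_extensional], safe)
  fix b g assume "b \<in> B" "g \<in> FC"
  moreover have "restrict (\<lambda>a. restrict (\<lambda>k. g (k b)) (Mor B FB C FC) (T a)) A
      = restrict (\<lambda>a. g (T a b)) A"
    using assms(2) by (intro restrict_ext) auto
  ultimately show "restrict (\<lambda>a. restrict (\<lambda>k. g (k b)) (Mor B FB C FC) (T a)) A \<in> FA"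
    using assms(3) by simp
qed

lemma Mor_into_exp_top_curryI:
  assumes "bishop_topology A FA"
    and "\<And>a. a \<in> A \<Longrightarrow> T a \<in> Mor B FB C FC"
    and "\<And>b. b \<in> B \<Longrightarrow> restrict (\<lambda>a. T a b) A \<in> Mor A FA C FC"
  shows "restrict T A \<in> Mor A FA (Mor B FB C FC) (exp_top B FB C FC)"
proof (rule Mor_into_exp_topI[OF assms(1)])
  show "restrict T A \<in> A \<rightarrow>\<^sub>E Mor B FB C FC" using assms(2) by auto
  fix b g assume "b \<in> B" "g \<in> FC"
  then have "restrict (\<lambda>a. g (restrict (\<lambda>a. T a b) A a)) A \<in> FA"
    using Mor_pullback[OF assms(3)] by blast
  moreover have "restrict (\<lambda>a. g (restrict (\<lambda>a. T a b) A a)) A = restrict (\<lambda>a. g (restrict T A a b)) A"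
    by (intro restrict_ext) simp
  ultimately show "restrict (\<lambda>a. g (restrict T A a b)) A \<in> FA" by simp
qed

lemma Mor_comp:
  assumes l: "l \<in> Mor A FA B FB" and \<phi>: "\<phi> \<in> Mor B FB C FC"
  shows "restrict (\<lambda>a. \<phi> (l a)) A \<in> Mor A FA C FC"
proof -
  have "restrict (\<lambda>a. f (restrict (\<lambda>a. \<phi> (l a)) A a)) A \<in> FA" if "f \<in> FC" for f
  proof -
    have "restrict (\<lambda>a. restrict (\<lambda>b. f (\<phi> b)) B (l a)) A \<in> FA"
      by (rule Mor_pullback[OF l Mor_pullback[OF \<phi> \<open>f \<in> FC\<close>]])
    moreover have "restrict (\<lambda>a. restrict (\<lambda>b. f (\<phi> b)) B (l a)) A
        = restrict (\<lambda>a. f (restrict (\<lambda>a. \<phi> (l a)) A a)) A"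
      using Mor_mapsto[OF l] by (intro restrict_ext) simp
    ultimately show ?thesis by simp
  qed
  moreover have "restrict (\<lambda>a. \<phi> (l a)) A \<in> A \<rightarrow>\<^sub>E C"
    using Mor_mapsto[OF \<phi> Mor_mapsto[OF l]] by simp
  ultimately show ?thesis unfolding Mor_def by simp
qed

lemma precomp_in_Mor_exp_top:
  assumes "l \<in> Mor A FA B FB"
  shows "restrict (\<lambda>\<phi>. restrict (\<lambda>a. \<phi> (l a)) A) (Mor B FB C FC)
     \<in> Mor (Mor B FB C FC) (exp_top B FB C FC) (Mor A FA C FC) (exp_top A FA C FC)"
proof (rule Mor_into_exp_topI[OF bishop_topology_exp_top])
  show "restrict (\<lambda>\<phi>. restrict (\<lambda>a. \<phi> (l a)) A) (Mor B FB C FC) \<in> Mor B FB C FC \<rightarrow>\<^sub>E Mor A FA C FC"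
    using Mor_comp[OF assms] by auto
  fix a g assume "a \<in> A" "g \<in> FC"
  have "restrict (\<lambda>\<phi>. g (\<phi> (l a))) (Mor B FB C FC) \<in> exp_top B FB C FC"
    by (rule evaluation_in_exp_top[OF Mor_mapsto[OF assms \<open>a \<in> A\<close>] \<open>g \<in> FC\<close>])
  moreover have "restrict (\<lambda>\<phi>. g (\<phi> (l a))) (Mor B FB C FC)
      = restrict (\<lambda>\<phi>. g (restrict (\<lambda>\<phi>. restrict (\<lambda>a. \<phi> (l a)) A) (Mor B FB C FC) \<phi> a)) (Mor B FB C FC)"
    using \<open>a \<in> A\<close> by (intro restrict_ext) simp
  ultimately show "restrict (\<lambda>\<phi>. g (restrict (\<lambda>\<phi>. restrict (\<lambda>a. \<phi> (l a)) A) (Mor B FB C FC) \<phi> a))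
      (Mor B FB C FC) \<in> exp_top B FB C FC"
    by simp
qed

lemma postcomp_in_Mor_exp_top:
  assumes "\<phi> \<in> Mor B FB C FC"
  shows "restrict (\<lambda>l. restrict (\<lambda>a. \<phi> (l a)) A) (Mor A FA B FB)
     \<in> Mor (Mor A FA B FB) (exp_top A FA B FB) (Mor A FA C FC) (exp_top A FA C FC)"
proof (rule Mor_into_exp_topI[OF bishop_topology_exp_top])
  show "restrict (\<lambda>l. restrict (\<lambda>a. \<phi> (l a)) A) (Mor A FA B FB) \<in> Mor A FA B FB \<rightarrow>\<^sub>E Mor A FA C FC"
    using Mor_comp[OF _ assms] by auto
  fix a g assume "a \<in> A" "g \<in> FC"
  have "restrict (\<lambda>l. restrict (\<lambda>b. g (\<phi> b)) B (l a)) (Mor A FA B FB) \<in> exp_top A FA B FB"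
    by (rule evaluation_in_exp_top[OF \<open>a \<in> A\<close> Mor_pullback[OF assms \<open>g \<in> FC\<close>]])
  moreover have "restrict (\<lambda>l. restrict (\<lambda>b. g (\<phi> b)) B (l a)) (Mor A FA B FB)
      = restrict (\<lambda>l. g (restrict (\<lambda>l. restrict (\<lambda>a. \<phi> (l a)) A) (Mor A FA B FB) l a)) (Mor A FA B FB)"
    using \<open>a \<in> A\<close> by (intro restrict_ext) (auto dest: Mor_mapsto)
  ultimately show "restrict (\<lambda>l. g (restrict (\<lambda>l. restrict (\<lambda>a. \<phi> (l a)) A) (Mor A FA B FB) l a))
      (Mor A FA B FB) \<in> exp_top A FA B FB"
    by simp
qed

lemma precomp_operator_in_Mor:
  "restrict (\<lambda>l. restrict (\<lambda>\<phi>. restrict (\<lambda>a. \<phi> (l a)) A) (Mor B FB C FC)) (Mor A FA B FB)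
     \<in> Mor (Mor A FA B FB) (exp_top A FA B FB)
           (Mor (Mor B FB C FC) (exp_top B FB C FC) (Mor A FA C FC) (exp_top A FA C FC))
           (exp_top (Mor B FB C FC) (exp_top B FB C FC) (Mor A FA C FC) (exp_top A FA C FC))"
proof (rule Mor_into_exp_top_curryI[OF bishop_topology_exp_top])
  fix \<phi> assume \<phi>: "\<phi> \<in> Mor B FB C FC"
  have "restrict (\<lambda>l. restrict (\<lambda>\<phi>. restrict (\<lambda>a. \<phi> (l a)) A) (Mor B FB C FC) \<phi>) (Mor A FA B FB)
      = restrict (\<lambda>l. restrict (\<lambda>a. \<phi> (l a)) A) (Mor A FA B FB)"
    using \<phi> by (intro restrict_ext) simp
  with postcomp_in_Mor_exp_top[OF \<phi>]
  show "restrict (\<lambda>l. restrict (\<lambda>\<phi>. restrict (\<lambda>a. \<phi> (l a)) A) (Mor B FB C FC) \<phi>) (Mor A FA B FB)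
      \<in> Mor (Mor A FA B FB) (exp_top A FA B FB) (Mor A FA C FC) (exp_top A FA C FC)"
    by simp
qed (rule precomp_in_Mor_exp_top)

lemma postcomp_operator_in_Mor:
  "restrict (\<lambda>\<phi>. restrict (\<lambda>l. restrict (\<lambda>a. \<phi> (l a)) A) (Mor A FA B FB)) (Mor B FB C FC)
     \<in> Mor (Mor B FB C FC) (exp_top B FB C FC)
           (Mor (Mor A FA B FB) (exp_top A FA B FB) (Mor A FA C FC) (exp_top A FA C FC))
           (exp_top (Mor A FA B FB) (exp_top A FA B FB) (Mor A FA C FC) (exp_top A FA C FC))"
proof (rule Mor_into_exp_top_curryI[OF bishop_topology_exp_top])
  fix l assume l: "l \<in> Mor A FA B FB"
  have "restrict (\<lambda>\<phi>. restrict (\<lambda>l. restrict (\<lambda>a. \<phi> (l a)) A) (Mor A FA B FB) l) (Mor B FB C FC)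
      = restrict (\<lambda>\<phi>. restrict (\<lambda>a. \<phi> (l a)) A) (Mor B FB C FC)"
    using l by (intro restrict_ext) simp
  with precomp_in_Mor_exp_top[OF l]
  show "restrict (\<lambda>\<phi>. restrict (\<lambda>l. restrict (\<lambda>a. \<phi> (l a)) A) (Mor A FA B FB) l) (Mor B FB C FC)
      \<in> Mor (Mor B FB C FC) (exp_top B FB C FC) (Mor A FA C FC) (exp_top A FA C FC)"
    by simp
qed (rule postcomp_in_Mor_exp_top)

theorem proposition11p1:
  fixes X :: "'a set" and F :: "('a \<Rightarrow> real) set"
    and Y :: "'b set" and G :: "('b \<Rightarrow> real) set"
    and Z :: "'c set" and H :: "('c \<Rightarrow> real) set"
  assumes "bishop_topology X F" and "bishop_topology Y G" and "bishop_topology Z H"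
  shows "(restrict (\<lambda>l. restrict (\<lambda>\<phi>. restrict (\<lambda>y. \<phi> (l y)) Y) (Mor Z H X F)) (Mor Y G Z H)
           \<in> Mor (Mor Y G Z H) (exp_top Y G Z H)
                 (Mor (Mor Z H X F) (exp_top Z H X F) (Mor Y G X F) (exp_top Y G X F))
                 (exp_top (Mor Z H X F) (exp_top Z H X F) (Mor Y G X F) (exp_top Y G X F))) \<and>
         (restrict (\<lambda>m. restrict (\<lambda>\<theta>. restrict (\<lambda>x. m (\<theta> x)) X) (Mor X F Z H)) (Mor Z H Y G)
           \<in> Mor (Mor Z H Y G) (exp_top Z H Y G)
                 (Mor (Mor X F Z H) (exp_top X F Z H) (Mor X F Y G) (exp_top X F Y G))
                 (exp_top (Mor X F Z H) (exp_top X F Z H) (Mor X F Y G) (exp_top X F Y G)))"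
  by (rule conjI[OF precomp_operator_in_Mor postcomp_operator_in_Mor])

end
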